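(* Let $\lambda=(\lambda_1,\lambda_2,\lambda_3)$ with $\lambda_1\ge\lambda_2\ge\lambda_3\ge1$ integers, and $A=\mathcal{L}(\lambda)$. (1) If $\lambda_1=\lambda_2=\lambda_3$: $\mathbb{SG}(A)=0$ if $\lambda_3\ge3$ is odd; $\mathbb{SG}(A)=1$ if $\lambda_3=1$ or $\lambda_3\ge4$ is even; $\mathbb{SG}(A)=2$ if $\lambda_3=2$. (2) If $\lambda_1>\lambda_2=\lambda_3$: $\mathbb{SG}(A)=0$ if $\lambda_3$ is odd, $1$ if $\lambda_3$ is even. (3) If $\lambda_1=\lambda_2>\lambda_3$: $\mathbb{SG}(A)=0$ if $\lambda_3$ is even, $1$ if $\lambda_3$ is odd. (4) If $\lambda_1>\lambda_2>\lambda_3=1$: $\mathbb{SG}(A)=1$ if $\lambda_2$ is even, $2$ if $\lambda_2$ is odd. (5) If $\lambda_1>\lambda_2>\lambda_3>1$: $\mathbb{SG}(A)=0$ if $\lambda_3$ is even, $1$ if $\lambda_3$ is odd.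
   Context: A partition is a finite non-increasing sequence of positive integers; $()$ is the empty partition. For non-negative $i,j$, $\lambda[i,j]$ is $(\lambda_{i+1}-j,\dots,\lambda_r-j)$ with all non-positive entries removed. LCTR: positions $\mathcal{L}(\lambda)$; if $\lambda\neq()$ the two moves go to $\mathcal{L}(\lambda[1,0])$ and $\mathcal{L}(\lambda[0,1])$; $\mathcal{L}(())$ is terminal. Normal play; $\mathbb{SG}(A)=\operatorname{mex}\{\mathbb{SG}(B):A\to B\}$. *)

theory Defs
  imports Main
begin

definition is_partition :: "nat list \<Rightarrow> bool" where
  "is_partition xs \<longleftrightarrow> sorted_wrt (\<ge>) xs \<and> (\<forall>x\<in>set xs. 0 < x)"

definition shift :: "nat list \<Rightarrow> nat \<Rightarrow> nat \<Rightarrow> nat list" where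
  "shift lam i j = map (\<lambda>x. x - j) (filter (\<lambda>x. j < x) (drop i lam))"

definition mex :: "nat set \<Rightarrow> nat" where
  "mex S = (LEAST n. n \<notin> S)"

text \<open>Sprague-Grundy value of L(lambda): the two moves go to lambda[1,0] and lambda[0,1]; L(()) is terminal.\<close>
function SG :: "nat list \<Rightarrow> nat" where
  "SG lam = (if lam = [] then 0 else mex {SG (shift lam 1 0), SG (shift lam 0 1)})"
  by pat_completeness auto
termination
proof (relation "measure (\<lambda>l. sum_list l + length l)")
  show "wf (measure (\<lambda>l. sum_list l + length l))" by simp
next
  fix lam :: "nat list"
  assume "lam \<noteq> []"
  then obtain a t where lam: "lam = a # t" by (cases lam) auto
  have "sum_list (filter (\<lambda>x. 0 < x) t) \<le> sum_list t"
    by (induction t) auto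
  moreover have "length (filter (\<lambda>x. 0 < x) t) \<le> length t" by simp
  ultimately show "(shift lam 1 0, lam) \<in> measure (\<lambda>l. sum_list l + length l)"
    using lam by (simp add: shift_def less_Suc_eq_le add_mono)
next
  fix lam :: "nat list"
  assume ne: "lam \<noteq> []"
  have key: "\<And>l::nat list. l \<noteq> [] \<Longrightarrow> sum_list (map (\<lambda>x. x - 1) (filter (\<lambda>x. 1 < x) l)) + length (filter (\<lambda>x. 1 < x) l) < sum_list l + length l"
  proof -
    fix l :: "nat list"
    have "sum_list (map (\<lambda>x. x - 1) (filter (\<lambda>x. 1 < x) l)) + length (filter (\<lambda>x. 1 < x) l) \<le> sum_list l"
      by (induction l) auto
    moreover assume "l \<noteq> []"
    ultimately show "sum_list (map (\<lambda>x. x - 1) (filter (\<lambda>x. 1 < x) l)) + length (filter (\<lambda>x. 1 < x) l) < sum_list l + length l"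
      by (metis add_strict_left_mono le_less_trans length_greater_0_conv add_0_right)
  qed
  show "(shift lam 0 1, lam) \<in> measure (\<lambda>l. sum_list l + length l)"
    using key[OF ne] by (simp add: shift_def)
qed

end

theory Submission
  imports Defs
begin

text \<open>
  In \<open>\<L>(\<lambda>)\<close> one move deletes the largest part and the other subtracts one from every
  part, so for a partition with at most three parts the Grundy value is determined by induction
  on the smallest part, starting from closed forms for one and two parts. Every inductive step
  is a finite check of a mex of two values, split by the parities of the parts and by which of
  them coincide.
\<close>

lemma mex_doubleton:
  "mex {x, y} = (if x \<noteq> 0 \<and> y \<noteq> 0 then 0 else if x \<noteq> 1 \<and> y \<noteq> 1 then 1 else 2)"
  unfolding mex_def by (rule Least_equality) (auto split: if_splits)

lemma mex_singleton: "mex {x} = (if x \<noteq> 0 then 0 else 1)"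
  using mex_doubleton[of x x] by simp

(* The defining equation of SG rewrites its own right-hand side, so simp would unfold it forever. *)
declare SG.simps [simp del]

lemma shift_first_row:
  assumes "is_partition (x # xs)"
  shows "shift (x # xs) 1 0 = xs"
  using assms by (simp add: shift_def is_partition_def filter_id_conv)

lemma SG_Nil [simp]: "SG [] = 0"
  by (simp add: SG.simps)

lemma SG_Cons_partition:
  assumes "is_partition (x # xs)"
  shows "SG (x # xs) = mex {SG xs, SG (map (\<lambda>y. y - 1) (filter (\<lambda>y. 1 < y) (x # xs)))}"
proof -
  have "SG (x # xs) = mex {SG (shift (x # xs) 1 0), SG (shift (x # xs) 0 1)}"
    by (subst SG.simps) simp
  then show ?thesis
    by (simp only: shift_first_row[OF assms]) (simp add: shift_def)
qed

definition grundy_one :: "nat \<Rightarrow> nat" where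
  "grundy_one a = (if odd a then 1 else 2)"

definition grundy_two :: "nat \<Rightarrow> nat \<Rightarrow> nat" where
  "grundy_two a b = (if a = b then (if odd b then 2 else 0) else (if odd b then 0 else 1))"

lemma SG_single: "1 \<le> a \<Longrightarrow> SG [a] = grundy_one a"
  by (induction a rule: nat_induct_at_least)
    (simp_all add: SG_Cons_partition is_partition_def mex_singleton mex_doubleton grundy_one_def)

lemma SG_pair: "1 \<le> b \<Longrightarrow> b \<le> a \<Longrightarrow> SG [a, b] = grundy_two a b"
proof (induction b arbitrary: a rule: nat_induct_at_least)
  case base
  show ?case
  proof (cases "a = 1")
    case True
    then show ?thesis
      by (simp add: SG_Cons_partition is_partition_def SG_single mex_singleton mex_doubleton
          grundy_one_def grundy_two_def)
  next
    case False
    with base have "SG [a, 1] = mex {SG [1], SG [a - 1]}"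
      by (simp add: SG_Cons_partition is_partition_def)
    with False base show ?thesis
      by (simp add: SG_single mex_doubleton grundy_one_def grundy_two_def)
  qed
next
  case (Suc b)
  have "SG [a, Suc b] = mex {SG [Suc b], SG [a - 1, b]}"
    using Suc.prems Suc.hyps by (simp add: SG_Cons_partition is_partition_def)
  also have "\<dots> = mex {grundy_one (Suc b), grundy_two (a - 1) b}"
    using Suc.prems Suc.hyps by (simp add: SG_single Suc.IH)
  also have "\<dots> = grundy_two a (Suc b)"
    using Suc.prems Suc.hyps by (auto simp add: mex_doubleton grundy_one_def grundy_two_def)
  finally show ?case .
qed

definition grundy_three :: "nat \<Rightarrow> nat \<Rightarrow> nat \<Rightarrow> nat" where
  "grundy_three a b c =
     (if a = b \<and> b = c then (if c \<ge> 3 \<and> odd c then 0 else if c = 2 then 2 else 1)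
      else if b = c then (if odd c then 0 else 1)
      else if a = b then (if even c then 0 else 1)
      else if c = 1 then (if even b then 1 else 2)
      else (if even c then 0 else 1))"

lemma SG_triple_smallest_one:
  assumes "1 \<le> b" and "b \<le> a"
  shows "SG [a, b, 1] = grundy_three a b 1"
proof -
  consider "a = 1" | "b = 1" "2 \<le> a" | "2 \<le> b" using assms by linarith
  then show ?thesis
  proof cases
    case 1
    with assms have "SG [a, b, 1] = mex {SG [1, 1], 0}"
      by (simp add: SG_Cons_partition is_partition_def)
    then show ?thesis
      using 1 assms by (simp add: SG_pair mex_doubleton grundy_two_def grundy_three_def)
  next
    case 2
    then have "SG [a, b, 1] = mex {SG [1, 1], SG [a - 1]}"
      by (simp add: SG_Cons_partition is_partition_def)
    then show ?thesis
      using 2 by (simp add: SG_pair SG_single mex_doubleton grundy_one_def grundy_two_def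
          grundy_three_def)
  next
    case 3
    with assms have "SG [a, b, 1] = mex {SG [b, 1], SG [a - 1, b - 1]}"
      by (simp add: SG_Cons_partition is_partition_def)
    then show ?thesis
      using 3 assms by (simp add: SG_pair mex_doubleton grundy_two_def grundy_three_def) presburger
  qed
qed

lemma SG_triple: "1 \<le> c \<Longrightarrow> c \<le> b \<Longrightarrow> b \<le> a \<Longrightarrow> SG [a, b, c] = grundy_three a b c"
proof (induction c arbitrary: a b rule: nat_induct_at_least)
  case base
  then show ?case by (intro SG_triple_smallest_one)
next
  case (Suc c)
  have "SG [a, b, Suc c] = mex {SG [b, Suc c], SG [a - 1, b - 1, c]}"
    using Suc by (simp add: SG_Cons_partition is_partition_def)
  also have "\<dots> = mex {grundy_two b (Suc c), grundy_three (a - 1) (b - 1) c}"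
    using Suc by (simp add: SG_pair)
  also have "\<dots> = grundy_three a b (Suc c)"
    using Suc.hyps Suc.prems unfolding mex_doubleton grundy_two_def grundy_three_def
    by (simp split: if_split) presburger
  finally show ?case .
qed

theorem mainTheorem9:
  fixes l1 l2 l3 :: nat
  assumes "l1 \<ge> l2" and "l2 \<ge> l3" and "l3 \<ge> 1"
  shows "(l1 = l2 \<and> l2 = l3 \<longrightarrow>
            ((l3 \<ge> 3 \<and> odd l3 \<longrightarrow> SG [l1, l2, l3] = 0) \<and>
             ((l3 = 1 \<or> (l3 \<ge> 4 \<and> even l3)) \<longrightarrow> SG [l1, l2, l3] = 1) \<and>
             (l3 = 2 \<longrightarrow> SG [l1, l2, l3] = 2)))
       \<and> (l1 > l2 \<and> l2 = l3 \<longrightarrow>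
            ((odd l3 \<longrightarrow> SG [l1, l2, l3] = 0) \<and> (even l3 \<longrightarrow> SG [l1, l2, l3] = 1)))
       \<and> (l1 = l2 \<and> l2 > l3 \<longrightarrow>
            ((even l3 \<longrightarrow> SG [l1, l2, l3] = 0) \<and> (odd l3 \<longrightarrow> SG [l1, l2, l3] = 1)))
       \<and> (l1 > l2 \<and> l2 > l3 \<and> l3 = 1 \<longrightarrow>
            ((even l2 \<longrightarrow> SG [l1, l2, l3] = 1) \<and> (odd l2 \<longrightarrow> SG [l1, l2, l3] = 2)))
       \<and> (l1 > l2 \<and> l2 > l3 \<and> l3 > 1 \<longrightarrow>
            ((even l3 \<longrightarrow> SG [l1, l2, l3] = 0) \<and> (odd l3 \<longrightarrow> SG [l1, l2, l3] = 1)))"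
proof -
  have "SG [l1, l2, l3] = grundy_three l1 l2 l3"
    using assms by (intro SG_triple)
  then show ?thesis
    unfolding grundy_three_def by (intro conjI impI; elim conjE disjE; simp)
qed

end
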